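(* Let $p\ge1$, $\mathbf m=(m_1,\ldots,m_p)\in\mathbb N^p$, $n\in\mathbb N$, and $x\in\mathbb C$ with $|x|\le 1$ and $(m_p,x)\neq(1,1)$. Then \[ n\int_0^x t^{n-1}dt\,\frac{dt}{1-t}\Big(\frac{dt}{t}\Big)^{m_1-1}\frac{dt}{1-t}\Big(\frac{dt}{t}\Big)^{m_2-1}\cdots\frac{dt}{1-t}\Big(\frac{dt}{t}\Big)^{m_p-1} =(-1)^p\,\zeta^\star_n(m_1,\ldots,m_p;\underbrace{1,\ldots,1}_{p-1},x)-\sum_{j=1}^{p}(-1)^{j}\,\zeta^\star_n(m_1,\ldots,m_{j-1})\,\mathrm{Li}_{m_p,m_{p-1},\ldots,m_j}(x). \]
   Context: Iterated integrals: $\int_a^b f_q(t)dt\,f_{q-1}(t)dt\cdots f_1(t)dt:=\int_{a<t_q<\cdots<t_1<b}f_q(t_q)\cdots f_1(t_1)\,dt_1\cdots dt_q$ (the leftmost form carries the smallest variable), taken along the straight segment from $a$ to $b$ when $a,b$ are complex; $(dt/t)^{0}$ means the form is absent. For a composition $\mathbf k=(k_1,\ldots,k_r)$, variables $\mathbf x=(x_1,\ldots,x_r)$ and $n\in\mathbb N$: $\zeta^\star_n(\mathbf k;\mathbf x)=\sum_{n\ge n_1\ge\cdots\ge n_r\ge1}\prod_{i}x_i^{n_i}/n_i^{k_i}$, $\zeta^\star_n(\mathbf k)=\zeta^\star_n(\mathbf k;1,\ldots,1)$, and $\zeta^\star_n(\emptyset)=1$. The single-variable multiple polylogarithm is $\mathrm{Li}_{k_1,\ldots,k_r}(x)=\sum_{n_1>\cdots>n_r>0}x^{n_1}/(n_1^{k_1}\cdots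 n_r^{k_r})$. *)

theory Defs
  imports "HOL-Complex_Analysis.Complex_Analysis"
begin

text \<open>The list is given with the form carrying the LARGEST
variable first: itint [f1,...,fq] s = integral over 0 < t_q < ... < t_1 < s of
f_q(t_q) ... f_1(t_1), along straight segments from 0.\<close>
fun itint :: "(complex \<Rightarrow> complex) list \<Rightarrow> complex \<Rightarrow> complex" where
  "itint [] s = 1"
| "itint (f # fs) s = contour_integral (linepath 0 s) (\<lambda>t. f t * itint fs t)"

text \<open>The paper's notation: forms listed left to right, leftmost form carrying
the smallest variable.\<close>
definition iterated_integral_0 :: "complex \<Rightarrow> (complex \<Rightarrow> complex) list \<Rightarrow> complex" where
  "iterated_integral_0 b fs = itint (rev fs) b"

fun zeta_star_x :: "nat \<Rightarrow> nat list \<Rightarrow> complex list \<Rightarrow> complex" where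
  "zeta_star_x n [] _ = 1"
| "zeta_star_x n (k # ks) [] = 0"
| "zeta_star_x n (k # ks) (y # ys) =
     (\<Sum>n1=1..n. y ^ n1 / of_nat n1 ^ k * zeta_star_x n1 ks ys)"

definition zeta_star :: "nat \<Rightarrow> nat list \<Rightarrow> complex" where
  "zeta_star n ks = zeta_star_x n ks (replicate (length ks) 1)"

fun li_coeff :: "nat list \<Rightarrow> nat \<Rightarrow> complex" where
  "li_coeff [] N = (if N = 0 then 1 else 0)"
| "li_coeff [k] N = (if N = 0 then 0 else 1 / of_nat N ^ k)"
| "li_coeff (k # k' # ks) N =
     (if N = 0 then 0 else (1 / of_nat N ^ k) * (\<Sum>m\<in>{1..<N}. li_coeff (k' # ks) m))"

text \<open>Single-variable multiple polylogarithm, series summed in order of n1.\<close>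
definition Li :: "nat list \<Rightarrow> complex \<Rightarrow> complex" where
  "Li ks x = (\<Sum>N. li_coeff ks N * x ^ N)"

definition forms :: "nat \<Rightarrow> nat list \<Rightarrow> (complex \<Rightarrow> complex) list" where
  "forms n ms = (\<lambda>t. t ^ (n - 1)) #
     concat (map (\<lambda>mi. (\<lambda>t. 1 / (1 - t)) # replicate (mi - 1) (\<lambda>t. 1 / t)) ms)"

end

(* Induction on the list of forms, appending one form at a time. On the open unit disc the
   polylogarithms satisfy d/dx Li_{k,...}(x) = Li_{k-1,...}(x)/x for k >= 2 and
   d/dx Li_{1,k',...}(x) = Li_{k',...}(x)/(1-x), and the truncated sums sum_{v<=m} x^v/v^k inside
   zeta*_n(...; 1,...,1,x) obey the same rules. Hence appending dt/t or dt/(1-t) to the forms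
   differentiates the right-hand side exactly as it differentiates the iterated integral, and the
   fundamental theorem of calculus along [0,x] (both sides vanish at 0) carries the identity over.
   Reaching the unit circle needs continuity of Li up to the boundary: for a first index >= 2 the
   coefficients are O(N^(-3/2)); for first index 1 they tend to 0 with summable differences, so
   Abel summation gives continuity away from x = 1. *)

theory Submission
  imports Defs
begin

section \<open>Growth of the coefficients of Li\<close>

lemma sum_inverse_sqrt_le: "(\<Sum>m=1..M. 1 / sqrt (real m)) \<le> 2 * sqrt (real M)"
proof (induction M)
  case (Suc M)
  have "(sqrt (Suc M) - sqrt M) * (sqrt (Suc M) + sqrt M) = 1"
    by (simp add: algebra_simps)
  moreover have "sqrt (Suc M) + sqrt M \<le> 2 * sqrt (Suc M)"
    by simp
  ultimately have "1 \<le> (sqrt (Suc M) - sqrt M) * (2 * sqrt (Suc M))"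
    by (metis mult_left_mono diff_ge_0_iff_ge real_sqrt_le_iff of_nat_le_iff le_SucI order_refl)
  then have "1 / sqrt (Suc M) \<le> 2 * sqrt (Suc M) - 2 * sqrt M"
    by (simp add: field_simps)
  then show ?case using Suc by simp
qed simp

lemma norm_sum_le_sqrt_bound:
  fixes a :: "nat \<Rightarrow> 'a::real_normed_vector"
  assumes "\<And>m. norm (a m) \<le> C / sqrt (real m)"
  shows "norm (\<Sum>m\<in>{1..<N}. a m) \<le> 2 * C * sqrt (real N)"
proof -
  have "C \<ge> 0" using order_trans[OF norm_ge_zero assms[of 1]] by simp
  have "norm (\<Sum>m\<in>{1..<N}. a m) \<le> (\<Sum>m\<in>{1..<N}. C * (1 / sqrt (real m)))"
    using assms by (intro sum_norm_le) simp
  also have "\<dots> \<le> C * (\<Sum>m=1..N. 1 / sqrt (real m))"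
    unfolding sum_distrib_left[symmetric] using \<open>C \<ge> 0\<close>
    by (intro mult_left_mono sum_mono2) auto
  also have "\<dots> \<le> 2 * C * sqrt (real N)"
    using mult_left_mono[OF sum_inverse_sqrt_le[of N] \<open>C \<ge> 0\<close>] by (simp add: mult_ac)
  finally show ?thesis .
qed

lemma norm_inverse_power_le:
  assumes "m \<ge> 1" "k \<ge> j"
  shows "norm (1 / of_nat m ^ k :: complex) \<le> 1 / real m ^ j"
  using assms by (simp add: norm_divide norm_power frac_le power_increasing)

lemma li_coeff_Cons_0 [simp]: "li_coeff (k # ks) 0 = 0"
  by (cases ks) auto

lemma sqrt_le_real_nat: "sqrt (real m) \<le> real m"
proof (cases "m = 0")
  case False
  then have "sqrt (real m) * 1 \<le> sqrt (real m) * sqrt (real m)"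
    by (intro mult_left_mono real_sqrt_ge_one) auto
  then show ?thesis by simp
qed simp

text \<open>For \<open>m = 0\<close> the bound reads \<open>norm (li_coeff ks 0) \<le> 0\<close>, since \<open>C / 0 = 0\<close>.\<close>
lemma li_coeff_bound:
  assumes "ks \<noteq> []" "\<forall>k\<in>set ks. k \<ge> 1"
  shows "\<exists>C. \<forall>m. norm (li_coeff ks m) \<le> C / sqrt (real m)"
  using assms
proof (induction ks)
  case (Cons k ks)
  show ?case
  proof (cases ks)
    case Nil
    have "norm (li_coeff [k] m) \<le> 1 / sqrt (real m)" for m
    proof (cases "m = 0")
      case False
      then have "norm (li_coeff [k] m) \<le> 1 / real m"
        using norm_inverse_power_le[of m 1 k] Cons.prems by simp
      also have "\<dots> \<le> 1 / sqrt (real m)"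
        using False sqrt_le_real_nat[of m] by (intro divide_left_mono) auto
      finally show ?thesis .
    qed simp
    then show ?thesis using Nil by blast
  next
    case (Cons k' ks')
    then obtain C where C: "\<And>m. norm (li_coeff ks m) \<le> C / sqrt (real m)"
      using Cons.IH Cons.prems by auto
    have "norm (li_coeff (k # ks) m) \<le> 2 * C / sqrt (real m)" for m
    proof (cases "m = 0")
      case False
      have "norm (li_coeff (k # ks) m)
          = norm (1 / of_nat m ^ k :: complex) * norm (\<Sum>j\<in>{1..<m}. li_coeff ks j)"
        unfolding norm_mult[symmetric] using Cons False by simp
      also have "\<dots> \<le> 1 / real m * (2 * C * sqrt (real m))"
        using False Cons.prems norm_inverse_power_le[of m 1 k]
        by (intro mult_mono norm_sum_le_sqrt_bound C) auto
      also have "\<dots> = 2 * C / sqrt (real m)"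
        using False by (simp add: field_simps real_sqrt_mult[symmetric])
      finally show ?thesis .
    qed simp
    then show ?thesis by blast
  qed
qed simp

lemma inverse_mult_sqrt_eq: "sqrt (real m) / (real m * real m) = 1 / (real m * sqrt (real m))"
  by (cases "m = 0") (simp_all add: field_simps real_sqrt_mult[symmetric])

lemma summable_inverse_mult_sqrt: "summable (\<lambda>m. 1 / (real m * sqrt (real m)))"
proof -
  have "real m powr (-3/2) = 1 / (real m * sqrt (real m))" for m
  proof (cases "m = 0")
    case False
    then have "real m * sqrt (real m) = real m powr (3/2)"
      by (simp add: powr_half_sqrt[symmetric] powr_add[symmetric] powr_mult_base)
    then show ?thesis using False by (simp add: powr_minus_divide)
  qed simp
  moreover have "summable (\<lambda>m. real m powr (-3/2))"
    by (subst summable_real_powr_iff) simp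
  ultimately show ?thesis by simp
qed

lemma li_coeff_bound_Suc_Suc:
  assumes "\<forall>k\<in>set rest. k \<ge> 1"
  shows "\<exists>C. \<forall>m. norm (li_coeff (Suc (Suc k) # rest) m) \<le> C / (real m * sqrt (real m))"
proof (cases rest)
  case Nil
  have "norm (li_coeff [Suc (Suc k)] m) \<le> 1 / (real m * sqrt (real m))" for m
  proof (cases "m = 0")
    case False
    then have "norm (li_coeff [Suc (Suc k)] m) \<le> 1 / real m ^ 2"
      using norm_inverse_power_le[of m 2 "Suc (Suc k)"] by simp
    also have "\<dots> \<le> 1 / (real m * sqrt (real m))"
      using False sqrt_le_real_nat[of m]
      by (auto simp: power2_eq_square intro!: divide_left_mono mult_left_mono)
    finally show ?thesis .
  qed simp
  then show ?thesis using Nil by blast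
next
  case (Cons k' rs)
  then obtain C where C: "\<And>m. norm (li_coeff rest m) \<le> C / sqrt (real m)"
    using li_coeff_bound[of rest] assms by auto
  have "norm (li_coeff (Suc (Suc k) # rest) m) \<le> 2 * C / (real m * sqrt (real m))" for m
  proof (cases "m = 0")
    case False
    have "norm (li_coeff (Suc (Suc k) # rest) m)
        = norm (1 / of_nat m ^ Suc (Suc k) :: complex) * norm (\<Sum>j\<in>{1..<m}. li_coeff rest j)"
      unfolding norm_mult[symmetric] using Cons False by simp
    also have "\<dots> \<le> 1 / real m ^ 2 * (2 * C * sqrt (real m))"
      using False norm_inverse_power_le[of m 2 "Suc (Suc k)"]
      by (intro mult_mono norm_sum_le_sqrt_bound C) auto
    also have "\<dots> = 2 * C * (sqrt (real m) / (real m * real m))"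
      by (simp add: power2_eq_square)
    also have "\<dots> = 2 * C / (real m * sqrt (real m))"
      by (simp add: inverse_mult_sqrt_eq)
    finally show ?thesis .
  qed simp
  then show ?thesis by blast
qed

lemma summable_norm_li_coeff:
  assumes "k \<ge> 2" "\<forall>k\<in>set rest. k \<ge> 1"
  shows "summable (\<lambda>m. norm (li_coeff (k # rest) m))"
proof -
  obtain k' where k: "k = Suc (Suc k')" using assms(1) by (metis add_2_eq_Suc le_Suc_ex)
  obtain C where "\<And>m. norm (li_coeff (k # rest) m) \<le> C * (1 / (real m * sqrt (real m)))"
    using li_coeff_bound_Suc_Suc[OF assms(2)] unfolding k by auto
  then show ?thesis
    by (intro summable_comparison_test[OF _ summable_mult[OF summable_inverse_mult_sqrt]]) auto
qed

lemma li_coeff_tendsto_0: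
  assumes "ks \<noteq> []" "\<forall>k\<in>set ks. k \<ge> 1"
  shows "li_coeff ks \<longlonglongrightarrow> 0"
proof -
  obtain C where C: "\<And>m. norm (li_coeff ks m) \<le> C / sqrt (real m)"
    using li_coeff_bound[OF assms] by blast
  have "filterlim (\<lambda>m. sqrt (real m)) at_top sequentially"
    by (rule filterlim_compose[OF sqrt_at_top filterlim_real_sequentially])
  then have bound_lim: "(\<lambda>m. C / sqrt (real m)) \<longlonglongrightarrow> 0"
    by (rule tendsto_divide_0[OF tendsto_const filterlim_at_top_imp_at_infinity])
  show ?thesis
    by (rule Lim_null_comparison[OF always_eventually bound_lim]) (use C in blast)
qed

lemma li_coeff_diff_bound:
  assumes "\<forall>k\<in>set rest. k \<ge> 1"
  shows "\<exists>C. \<forall>N\<ge>1. norm (li_coeff (1 # rest) (Suc N) - li_coeff (1 # rest) N)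
                   \<le> C / (real N * sqrt (real N))"
proof (cases rest)
  case Nil
  have "norm (li_coeff [1] (Suc N) - li_coeff [1] N) \<le> 1 / (real N * sqrt (real N))"
    if "N \<ge> 1" for N
  proof -
    have "li_coeff [1] (Suc N) - li_coeff [1] N = of_real (1 / (real N + 1) - 1 / real N)"
      using that by simp
    then have "norm (li_coeff [1] (Suc N) - li_coeff [1] N) = \<bar>1 / (real N + 1) - 1 / real N\<bar>"
      by (simp only: norm_of_real)
    also have "\<dots> = 1 / (real N * (real N + 1))"
      using that by (simp add: field_simps)
    also have "\<dots> \<le> 1 / (real N * sqrt (real N))"
      using that sqrt_le_real_nat[of N] by (intro divide_left_mono mult_left_mono) auto
    finally show ?thesis .
  qed
  then show ?thesis using Nil by blast
next
  case (Cons k' rs)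
  then obtain C where C: "\<And>m. norm (li_coeff rest m) \<le> C / sqrt (real m)"
    using li_coeff_bound[of rest] assms by auto
  have "norm (li_coeff (1 # rest) (Suc N) - li_coeff (1 # rest) N)
          \<le> 3 * C / (real N * sqrt (real N))" if N: "N \<ge> 1" for N
  proof -
    define T where "T = (\<Sum>j\<in>{1..<N}. li_coeff rest j)"
    define a where "a = li_coeff rest N"
    have T: "norm T \<le> 2 * C * sqrt (real N)"
      unfolding T_def by (rule norm_sum_le_sqrt_bound[OF C])
    have "li_coeff (1 # rest) (Suc N) - li_coeff (1 # rest) N = (T + a) / (N + 1) - T / N"
      using Cons N by (simp add: T_def a_def add.commute)
    also have "\<dots> = a / (N + 1) - T / (N * (N + 1))"
    proof -
      have "(of_nat N :: complex) \<noteq> 0" "(1 + of_nat N :: complex) \<noteq> 0"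
        using N of_nat_neq_0[of N, where 'a=complex] by (simp_all add: add.commute)
      then have "(of_nat N + of_nat N * of_nat N :: complex) \<noteq> 0"
        by (metis distrib_left mult_1_right mult_eq_0_iff add.commute)
      with \<open>(of_nat N :: complex) \<noteq> 0\<close> \<open>(1 + of_nat N :: complex) \<noteq> 0\<close> show ?thesis
        by (simp add: divide_simps) (simp add: algebra_simps)
    qed
    finally have "norm (li_coeff (1 # rest) (Suc N) - li_coeff (1 # rest) N)
        \<le> norm (a / (N + 1)) + norm (T / (N * (N + 1)))"
      by (simp only: norm_triangle_ineq4)
    also have "\<dots> = norm a / real (N + 1) + norm T / real (N * (N + 1))"
      by (simp only: norm_divide norm_of_nat)
    also have "\<dots> \<le> (C / sqrt (real N)) / N + 2 * C * sqrt (real N) / (N * N)"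
    proof (rule add_mono)
      show "norm a / real (N + 1) \<le> (C / sqrt (real N)) / N"
        using C[of N] N order_trans[OF norm_ge_zero C[of N]] unfolding a_def
        by (intro frac_le) auto
      show "norm T / real (N * (N + 1)) \<le> 2 * C * sqrt (real N) / (N * N)"
        using T N order_trans[OF norm_ge_zero T] by (intro frac_le) auto
    qed
    also have "\<dots> = C * (1 / (real N * sqrt (real N))) + 2 * C * (sqrt (real N) / (real N * real N))"
      by (simp add: mult.commute)
    also have "\<dots> = 3 * C / (real N * sqrt (real N))"
      by (simp add: inverse_mult_sqrt_eq)
    finally show ?thesis .
  qed
  then show ?thesis by blast
qed

lemma summable_norm_li_coeff_diff:
  assumes "\<forall>k\<in>set rest. k \<ge> 1"
  shows "summable (\<lambda>N. norm (li_coeff (1 # rest) (Suc N) - li_coeff (1 # rest) N))"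
proof -
  obtain C where "\<forall>N\<ge>1. norm (li_coeff (1 # rest) (Suc N) - li_coeff (1 # rest) N)
                          \<le> C * (1 / (real N * sqrt (real N)))"
    using li_coeff_diff_bound[OF assms] by auto
  then show ?thesis
    by (intro summable_comparison_test[OF _ summable_mult[OF summable_inverse_mult_sqrt]]) auto
qed

section \<open>Power series on the closed unit disc\<close>

lemma continuous_on_cball_power_series:
  fixes c :: "nat \<Rightarrow> complex"
  assumes "summable (\<lambda>N. norm (c N))"
  shows "continuous_on (cball 0 1) (\<lambda>z. \<Sum>N. c N * z ^ N)"
proof -
  have "uniform_limit (cball 0 1) (\<lambda>K z. \<Sum>N<K. c N * z ^ N) (\<lambda>z. \<Sum>N. c N * z ^ N) sequentially"
  proof (rule Weierstrass_m_test[OF _ assms])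
    fix N and z :: complex
    assume "z \<in> cball 0 1"
    then show "norm (c N * z ^ N) \<le> norm (c N)"
      by (simp add: norm_mult norm_power mult_left_le power_le_one)
  qed
  then show ?thesis
    by (rule uniform_limit_theorem[rotated]) (auto intro!: always_eventually continuous_intros)
qed

lemma one_minus_mult_power_sum:
  fixes c :: "nat \<Rightarrow> 'a::comm_ring_1"
  shows "(1 - z) * (\<Sum>N<Suc K. c N * z ^ N)
    = c 0 + z * (\<Sum>N<K. (c (Suc N) - c N) * z ^ N) - c K * z ^ Suc K"
proof (induction K)
  case (Suc K)
  define S where "S = (\<Sum>N<K. (c (Suc N) - c N) * z ^ N)"
  have "(1 - z) * (\<Sum>N<Suc (Suc K). c N * z ^ N)
      = c 0 + z * S - c K * z ^ Suc K + (1 - z) * (c (Suc K) * z ^ Suc K)"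
    using Suc.IH by (simp add: S_def distrib_left)
  also have "\<dots> = c 0 + z * (S + (c (Suc K) - c K) * z ^ K) - c (Suc K) * z ^ Suc (Suc K)"
    by (simp add: algebra_simps)
  finally show ?case
    by (simp add: S_def)
qed (simp add: algebra_simps)

lemma power_series_sums_Abel:
  fixes c :: "nat \<Rightarrow> complex"
  assumes "summable (\<lambda>N. norm (c (Suc N) - c N))" "c \<longlonglongrightarrow> 0"
    and "norm z \<le> 1" "z \<noteq> 1"
  shows "(\<lambda>N. c N * z ^ N) sums ((c 0 + z * (\<Sum>N. (c (Suc N) - c N) * z ^ N)) / (1 - z))"
proof -
  have "summable (\<lambda>N. (c (Suc N) - c N) * z ^ N)"
  proof (rule summable_norm_cancel, rule summable_comparison_test[OF _ assms(1)], intro exI allI impI)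
    fix N
    show "norm (norm ((c (Suc N) - c N) * z ^ N)) \<le> norm (c (Suc N) - c N)"
      using assms(3) by (simp add: norm_mult norm_power mult_left_le power_le_one)
  qed
  then have "(\<lambda>K. \<Sum>N<K. (c (Suc N) - c N) * z ^ N) \<longlonglongrightarrow> (\<Sum>N. (c (Suc N) - c N) * z ^ N)"
    by (simp add: summable_LIMSEQ)
  moreover have "(\<lambda>K. c K * z ^ Suc K) \<longlonglongrightarrow> 0"
  proof (rule Lim_null_comparison[OF always_eventually tendsto_norm_zero[OF assms(2)]], rule allI)
    fix K
    show "norm (c K * z ^ Suc K) \<le> norm (c K)"
      using assms(3) by (simp add: norm_mult norm_power mult_left_le power_le_one del: power_Suc)
  qed
  ultimately have "(\<lambda>K. (c 0 + z * (\<Sum>N<K. (c (Suc N) - c N) * z ^ N) - c K * z ^ Suc K) / (1 - z))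
      \<longlonglongrightarrow> (c 0 + z * (\<Sum>N. (c (Suc N) - c N) * z ^ N) - 0) / (1 - z)"
    using assms(4) by (intro tendsto_intros) auto
  moreover have "(\<Sum>N<Suc K. c N * z ^ N)
      = (c 0 + z * (\<Sum>N<K. (c (Suc N) - c N) * z ^ N) - c K * z ^ Suc K) / (1 - z)" for K
    using one_minus_mult_power_sum[of z c K] assms(4)
    by (metis nonzero_mult_div_cancel_left right_minus_eq)
  ultimately have "(\<lambda>K. \<Sum>N<Suc K. c N * z ^ N)
      \<longlonglongrightarrow> (c 0 + z * (\<Sum>N. (c (Suc N) - c N) * z ^ N)) / (1 - z)"
    by simp
  then show ?thesis
    unfolding sums_def by (rule LIMSEQ_imp_Suc)
qed

lemma continuous_on_cball_minus_1_power_series: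
  fixes c :: "nat \<Rightarrow> complex"
  assumes "summable (\<lambda>N. norm (c (Suc N) - c N))" "c \<longlonglongrightarrow> 0"
  shows "continuous_on (cball 0 1 - {1}) (\<lambda>z. \<Sum>N. c N * z ^ N)"
proof -
  have "continuous_on (cball 0 1 - {1})
      (\<lambda>z. (c 0 + z * (\<Sum>N. (c (Suc N) - c N) * z ^ N)) / (1 - z))"
    by (intro continuous_intros continuous_on_subset[OF continuous_on_cball_power_series[OF assms(1)]])
      auto
  then show ?thesis
    by (rule continuous_on_cong[THEN iffD1, rotated 2])
       (use power_series_sums_Abel[OF assms] sums_unique in auto)
qed

section \<open>Continuity and derivatives of Li\<close>

lemma Li_Nil [simp]: "Li [] z = 1"
proof -
  have "(\<lambda>N. li_coeff [] N * z ^ N) = (\<lambda>N. if N = 0 then 1 else 0)"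
    by (rule ext) simp
  then have "(\<lambda>N. li_coeff [] N * z ^ N) sums 1"
    using sums_single[of 0 "\<lambda>_. 1 :: complex"] by simp
  then show ?thesis
    unfolding Li_def by (rule sums_unique[symmetric])
qed

lemma Li_0: "ks \<noteq> [] \<Longrightarrow> Li ks 0 = 0"
  unfolding Li_def by (cases ks) auto

lemma Li_continuous_on_cball:
  assumes "k \<ge> 2" "\<forall>k\<in>set rest. k \<ge> 1"
  shows "continuous_on (cball 0 1) (Li (k # rest))"
  unfolding Li_def[abs_def]
  by (rule continuous_on_cball_power_series[OF summable_norm_li_coeff[OF assms]])

lemma Li_continuous_on_cball_minus_1:
  assumes "k \<ge> 1" "\<forall>k\<in>set rest. k \<ge> 1"
  shows "continuous_on (cball 0 1 - {1}) (Li (k # rest))"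
proof (cases "k = 1")
  case True
  have "summable (\<lambda>N. norm (li_coeff (1 # rest) (Suc N) - li_coeff (1 # rest) N))"
    by (rule summable_norm_li_coeff_diff[OF assms(2)])
  moreover have "li_coeff (1 # rest) \<longlonglongrightarrow> 0"
    using assms by (intro li_coeff_tendsto_0) auto
  ultimately show ?thesis
    unfolding True Li_def[abs_def] by (rule continuous_on_cball_minus_1_power_series)
next
  case False
  then show ?thesis
    using assms by (intro continuous_on_subset[OF Li_continuous_on_cball]) auto
qed

lemma li_coeff_bounded:
  assumes "\<forall>k\<in>set ks. k \<ge> 1"
  shows "\<exists>C. \<forall>N. norm (li_coeff ks N) \<le> C"
proof (cases ks)
  case Nil
  then have "norm (li_coeff ks N) \<le> 1" for N by simp
  then show ?thesis by blast
next
  case (Cons k rest)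
  then obtain C where C: "\<And>m. norm (li_coeff ks m) \<le> C / sqrt (real m)"
    using li_coeff_bound[OF _ assms] by auto
  have "norm (li_coeff ks N) \<le> C" for N
  proof (cases "N = 0")
    case False
    have "C \<ge> 0" using order_trans[OF norm_ge_zero C[of 1]] by simp
    then have "C / sqrt (real N) \<le> C / 1"
      using False by (intro divide_left_mono) auto
    then show ?thesis using C[of N] by simp
  qed (use Cons order_trans[OF norm_ge_zero C[of 1]] in simp)
  then show ?thesis by blast
qed

lemma summable_norm_Li_series:
  assumes "\<forall>k\<in>set ks. k \<ge> 1" "norm z < 1"
  shows "summable (\<lambda>N. norm (li_coeff ks N * z ^ N))"
proof -
  obtain C where "\<And>N. norm (li_coeff ks N) \<le> C"
    using li_coeff_bounded[OF assms(1)] by blast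
  then have "norm (li_coeff ks N * z ^ N) \<le> C * norm z ^ N" for N
    by (simp add: norm_mult norm_power mult_right_mono)
  then show ?thesis
    using assms(2)
    by (intro summable_comparison_test[OF _ summable_mult[OF summable_geometric]]) auto
qed

lemma Li_has_field_derivative_diffs:
  assumes "\<forall>k\<in>set ks. k \<ge> 1" "norm z < 1"
  shows "(Li ks has_field_derivative (\<Sum>n. diffs (li_coeff ks) n * z ^ n)) (at z)"
  unfolding Li_def[abs_def]
proof (rule termdiffs_strong'[of 1])
  fix w :: complex
  assume "norm w < 1"
  then show "summable (\<lambda>n. li_coeff ks n * w ^ n)"
    by (rule summable_norm_cancel[OF summable_norm_Li_series[OF assms(1)]])
qed (use assms(2) in auto)

lemma diffs_li_coeff_Suc:
  assumes "r \<ge> 1"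
  shows "diffs (li_coeff (Suc r # rest)) n = li_coeff (r # rest) (Suc n)"
  using assms of_nat_neq_0[of n, where 'a=complex]
  by (cases rest) (simp_all add: diffs_def field_simps del: of_nat_Suc)

lemma diffs_li_coeff_1: "diffs (li_coeff (1 # rest)) n = (\<Sum>m\<le>n. li_coeff rest m)"
proof (cases rest)
  case Nil
  then show ?thesis
    using of_nat_neq_0[of n, where 'a=complex] by (simp add: diffs_def del: of_nat_Suc)
next
  case (Cons k' rs)
  have "{..n} = insert 0 {1..<Suc n}" by auto
  then have "(\<Sum>m\<le>n. li_coeff rest m) = (\<Sum>m\<in>{1..<Suc n}. li_coeff rest m)"
    using Cons by simp
  then show ?thesis
    using Cons of_nat_neq_0[of n, where 'a=complex] by (simp add: diffs_def del: of_nat_Suc)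
qed

lemma Li_has_field_derivative_Suc:
  assumes "r \<ge> 1" "\<forall>k\<in>set rest. k \<ge> 1" "norm z < 1" "z \<noteq> 0"
  shows "(Li (Suc r # rest) has_field_derivative Li (r # rest) z / z) (at z)"
proof -
  let ?c = "li_coeff (r # rest)"
  have "summable (\<lambda>N. ?c N * z ^ N)"
    using summable_norm_Li_series[of "r # rest" z] assms summable_norm_cancel by auto
  then have "(\<lambda>n. ?c (Suc n) * z ^ Suc n) sums Li (r # rest) z"
    unfolding Li_def using sums_Suc_iff[of "\<lambda>N. ?c N * z ^ N"] summable_sums by fastforce
  from sums_divide[OF this, of z]
  have "(\<lambda>n. ?c (Suc n) * z ^ n) sums (Li (r # rest) z / z)"
    using assms(4) by simp
  then show ?thesis
    using Li_has_field_derivative_diffs[of "Suc r # rest" z] assms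
    by (simp add: diffs_li_coeff_Suc sums_unique[symmetric])
qed

lemma Li_has_field_derivative_1:
  assumes "\<forall>k\<in>set rest. k \<ge> 1" "norm z < 1"
  shows "(Li (1 # rest) has_field_derivative Li rest z / (1 - z)) (at z)"
proof -
  have "Li rest z * (\<Sum>n. z ^ n) = (\<Sum>n. \<Sum>i\<le>n. li_coeff rest i * z ^ i * z ^ (n - i))"
    unfolding Li_def
    by (rule Cauchy_product[OF summable_norm_Li_series[OF assms]])
       (use assms(2) in \<open>simp add: norm_power summable_geometric\<close>)
  also have "\<dots> = (\<Sum>n. diffs (li_coeff (1 # rest)) n * z ^ n)"
    unfolding diffs_li_coeff_1 by (simp add: sum_distrib_right mult.assoc power_add[symmetric])
  finally show ?thesis
    using Li_has_field_derivative_diffs[of "1 # rest" z] assms suminf_geometric[OF assms(2)]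
    by (simp add: field_simps)
qed

section \<open>The right-hand side\<close>

text \<open>\<open>zeta_star_fun n [k\<^sub>1, ..., k\<^sub>r] f\<close> is the sum over \<open>n \<ge> n\<^sub>1 \<ge> ... \<ge> n\<^sub>r \<ge> 1\<close> of
  \<open>f n\<^sub>r / (n\<^sub>1^k\<^sub>1 ... n\<^sub>r^k\<^sub>r)\<close>; for \<open>f m = x^m\<close> it is \<open>\<zeta>\<^sup>\<star>\<^sub>n(k\<^sub>1, ..., k\<^sub>r; 1, ..., 1, x)\<close>.\<close>
fun zeta_star_fun :: "nat \<Rightarrow> nat list \<Rightarrow> (nat \<Rightarrow> complex) \<Rightarrow> complex" where
  "zeta_star_fun n [] f = f n"
| "zeta_star_fun n (k # ks) f = (\<Sum>n1=1..n. 1 / of_nat n1 ^ k * zeta_star_fun n1 ks f)"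

lemma zeta_star_eq_zeta_star_fun: "zeta_star n ms = zeta_star_fun n ms (\<lambda>_. 1)"
proof -
  have "zeta_star_x n ms (replicate (length ms) 1) = zeta_star_fun n ms (\<lambda>_. 1)"
    by (induction ms arbitrary: n) (auto simp: field_simps)
  then show ?thesis
    unfolding zeta_star_def .
qed

lemma zeta_star_x_eq_zeta_star_fun:
  "ms \<noteq> [] \<Longrightarrow> zeta_star_x n ms (replicate (length ms - 1) 1 @ [t]) = zeta_star_fun n ms (\<lambda>m. t ^ m)"
proof (induction ms arbitrary: n)
  case (Cons k ks)
  then show ?case
    by (cases ks) (simp_all add: field_simps)
qed simp

lemma zeta_star_fun_snoc:
  "zeta_star_fun n (ms @ [k]) f = zeta_star_fun n ms (\<lambda>m. \<Sum>\<nu>=1..m. f \<nu> / of_nat \<nu> ^ k)"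
  by (induction ms arbitrary: n) (auto simp: field_simps)

lemma zeta_star_fun_divide: "zeta_star_fun n ms (\<lambda>m. f m / c) = zeta_star_fun n ms f / c"
  by (induction ms arbitrary: n) (auto simp: sum_divide_distrib)

lemma zeta_star_fun_diff: "zeta_star_fun n ms (\<lambda>m. f m - g m) = zeta_star_fun n ms f - zeta_star_fun n ms g"
  by (induction ms arbitrary: n) (simp_all add: sum_subtractf[symmetric] right_diff_distrib)

lemma zeta_star_fun_cong:
  "n \<ge> 1 \<Longrightarrow> (\<And>m. m \<ge> 1 \<Longrightarrow> f m = g m) \<Longrightarrow> zeta_star_fun n ms f = zeta_star_fun n ms g"
  by (induction ms arbitrary: n) auto

lemma zeta_star_fun_has_field_derivative:
  assumes "\<And>m. ((\<lambda>t. F m t) has_field_derivative F' m) (at t)"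
  shows "((\<lambda>t. zeta_star_fun n ms (\<lambda>m. F m t)) has_field_derivative zeta_star_fun n ms F') (at t)"
proof (induction ms arbitrary: n)
  case (Cons k ks)
  then show ?case
    unfolding zeta_star_fun.simps by (intro DERIV_sum DERIV_cmult)
qed (simp add: assms)

lemma continuous_on_zeta_star_fun:
  assumes "\<And>m. continuous_on S (\<lambda>t. F m t)"
  shows "continuous_on S (\<lambda>t. zeta_star_fun n ms (\<lambda>m. F m t))"
  by (induction ms arbitrary: n) (auto intro!: continuous_intros assms)

definition polylog_partial :: "nat \<Rightarrow> nat \<Rightarrow> complex \<Rightarrow> complex" where
  "polylog_partial k m t = (\<Sum>\<nu>=1..m. t ^ \<nu> / of_nat \<nu> ^ k)"

lemma polylog_partial_has_field_derivative_Suc: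
  assumes "t \<noteq> 0"
  shows "(polylog_partial (Suc r) m has_field_derivative polylog_partial r m t / t) (at t)"
proof -
  have "(polylog_partial (Suc r) m has_field_derivative
      (\<Sum>\<nu>=1..m. of_nat \<nu> * t ^ (\<nu> - 1) / of_nat \<nu> ^ Suc r)) (at t)"
    unfolding polylog_partial_def[abs_def] by (auto intro!: derivative_eq_intros)
  moreover have "(\<Sum>\<nu>=1..m. of_nat \<nu> * t ^ (\<nu> - 1) / of_nat \<nu> ^ Suc r) = polylog_partial r m t / t"
    unfolding polylog_partial_def sum_divide_distrib
  proof (rule sum.cong)
    fix \<nu>
    assume "\<nu> \<in> {1..m}"
    then have "t ^ \<nu> = t * t ^ (\<nu> - 1)"
      by (cases \<nu>) auto
    then show "of_nat \<nu> * t ^ (\<nu> - 1) / of_nat \<nu> ^ Suc r = t ^ \<nu> / of_nat \<nu> ^ r / t"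
      using assms \<open>\<nu> \<in> {1..m}\<close> by (simp add: field_simps)
  qed simp
  ultimately show ?thesis
    by simp
qed

lemma polylog_partial_has_field_derivative_1:
  assumes "t \<noteq> 1"
  shows "(polylog_partial 1 m has_field_derivative (1 - t ^ m) / (1 - t)) (at t)"
proof -
  have "(polylog_partial 1 m has_field_derivative (\<Sum>\<nu>=1..m. of_nat \<nu> * t ^ (\<nu> - 1) / of_nat \<nu>)) (at t)"
    unfolding polylog_partial_def[abs_def] by (auto intro!: derivative_eq_intros)
  moreover have "(\<Sum>\<nu>=1..m. of_nat \<nu> * t ^ (\<nu> - 1) / of_nat \<nu>) = (\<Sum>i<m. t ^ i)"
    by (simp add: sum.atLeast1_atMost_eq)
  ultimately show ?thesis
    using assms by (simp add: sum_gp_strict)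
qed

text \<open>The summation index \<open>i\<close> is \<open>j - 1\<close> in the notation of the theorem.\<close>
definition rhs :: "nat \<Rightarrow> nat list \<Rightarrow> complex \<Rightarrow> complex" where
  "rhs n ms t = (-1) ^ length ms * zeta_star_fun n ms (\<lambda>m. t ^ m)
     - (\<Sum>i<length ms. (-1) ^ Suc i * zeta_star n (take i ms) * Li (rev (drop i ms)) t)"

text \<open>Appending \<open>k\<close> to \<open>ms\<close> turns \<open>rhs\<close> into a linear combination of the partial polylogarithms
  \<open>polylog_partial k m\<close> and of the polylogarithms \<open>Li (k # _)\<close>, with coefficients depending on \<open>ms\<close> only.\<close>
definition rhs_comb :: "nat \<Rightarrow> nat list \<Rightarrow> (nat \<Rightarrow> complex) \<Rightarrow> (nat \<Rightarrow> complex) \<Rightarrow> complex" where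
  "rhs_comb n ms A B = (-1) ^ Suc (length ms) * zeta_star_fun n ms A
     - (\<Sum>i\<le>length ms. (-1) ^ Suc i * zeta_star n (take i ms) * B i)"

lemma rhs_snoc:
  "rhs n (ms @ [k]) t = rhs_comb n ms (\<lambda>m. polylog_partial k m t) (\<lambda>i. Li (k # rev (drop i ms)) t)"
proof -
  have "(\<Sum>i<length (ms @ [k]). (-1) ^ Suc i * zeta_star n (take i (ms @ [k])) * Li (rev (drop i (ms @ [k]))) t)
      = (\<Sum>i\<le>length ms. (-1) ^ Suc i * zeta_star n (take i ms) * Li (k # rev (drop i ms)) t)"
    unfolding length_append_singleton lessThan_Suc_atMost by (intro sum.cong) auto
  then show ?thesis
    unfolding rhs_def rhs_comb_def zeta_star_fun_snoc polylog_partial_def by simp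
qed

lemma rhs_comb_divide:
  "rhs_comb n ms (\<lambda>m. A m / c) (\<lambda>i. B i / c) = rhs_comb n ms A B / c"
  unfolding rhs_comb_def zeta_star_fun_divide
  by (simp add: sum_divide_distrib diff_divide_distrib)

lemma rhs_comb_has_field_derivative:
  assumes "\<And>m. ((\<lambda>t. A m t) has_field_derivative A' m) (at t)"
    and "\<And>i. i \<le> length ms \<Longrightarrow> ((\<lambda>t. B i t) has_field_derivative B' i) (at t)"
  shows "((\<lambda>t. rhs_comb n ms (\<lambda>m. A m t) (\<lambda>i. B i t)) has_field_derivative rhs_comb n ms A' B') (at t)"
  unfolding rhs_comb_def
  by (intro DERIV_diff DERIV_cmult DERIV_sum zeta_star_fun_has_field_derivative assms) auto

lemma rhs_comb_Li_drop:
  "rhs_comb n ms (\<lambda>m. 1 - t ^ m) (\<lambda>i. Li (rev (drop i ms)) t) = rhs n ms t"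
  unfolding rhs_comb_def rhs_def zeta_star_fun_diff zeta_star_eq_zeta_star_fun[symmetric]
  by (simp add: lessThan_Suc_atMost[symmetric] algebra_simps)

lemma rhs_has_field_derivative_Suc:
  assumes "r \<ge> 1" "\<forall>k\<in>set ms. k \<ge> 1" "norm t < 1" "t \<noteq> 0"
  shows "(rhs n (ms @ [Suc r]) has_field_derivative rhs n (ms @ [r]) t / t) (at t)"
proof -
  have "((\<lambda>t. rhs_comb n ms (\<lambda>m. polylog_partial (Suc r) m t) (\<lambda>i. Li (Suc r # rev (drop i ms)) t))
      has_field_derivative
      rhs_comb n ms (\<lambda>m. polylog_partial r m t / t) (\<lambda>i. Li (r # rev (drop i ms)) t / t)) (at t)"
    using assms set_drop_subset[of _ ms]
    by (intro rhs_comb_has_field_derivative polylog_partial_has_field_derivative_Suc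
        Li_has_field_derivative_Suc) auto
  then show ?thesis
    unfolding rhs_comb_divide rhs_snoc[symmetric] by (simp add: rhs_snoc[abs_def])
qed

lemma rhs_has_field_derivative_1:
  assumes "\<forall>k\<in>set ms. k \<ge> 1" "norm t < 1"
  shows "(rhs n (ms @ [1]) has_field_derivative rhs n ms t / (1 - t)) (at t)"
proof -
  have "((\<lambda>t. rhs_comb n ms (\<lambda>m. polylog_partial 1 m t) (\<lambda>i. Li (1 # rev (drop i ms)) t))
      has_field_derivative
      rhs_comb n ms (\<lambda>m. (1 - t ^ m) / (1 - t)) (\<lambda>i. Li (rev (drop i ms)) t / (1 - t))) (at t)"
    using assms set_drop_subset[of _ ms]
    by (intro rhs_comb_has_field_derivative polylog_partial_has_field_derivative_1
        Li_has_field_derivative_1) auto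
  then show ?thesis
    unfolding rhs_comb_divide rhs_comb_Li_drop by (simp add: rhs_snoc[abs_def])
qed

lemma continuous_on_rhs_snoc:
  assumes "\<forall>k\<in>set ms. k \<ge> 1"
    and "\<And>rest. \<forall>k\<in>set rest. k \<ge> 1 \<Longrightarrow> continuous_on S (Li (k # rest))"
  shows "continuous_on S (rhs n (ms @ [k]))"
proof -
  have "continuous_on S (\<lambda>t. rhs_comb n ms (\<lambda>m. polylog_partial k m t) (\<lambda>i. Li (k # rev (drop i ms)) t))"
    unfolding rhs_comb_def polylog_partial_def
    using assms set_drop_subset[of _ ms]
    by (intro continuous_intros continuous_on_zeta_star_fun assms(2)) auto
  then show ?thesis
    by (simp add: rhs_snoc[abs_def])
qed

lemma rhs_at_0: "n \<ge> 1 \<Longrightarrow> rhs n ms 0 = 0"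
proof -
  assume "n \<ge> 1"
  then have "zeta_star_fun n ms (\<lambda>m. 0 ^ m) = zeta_star_fun n ms (\<lambda>_. 0)"
    by (intro zeta_star_fun_cong) auto
  also have "\<dots> = 0"
    by (induction ms arbitrary: n) simp_all
  finally have "zeta_star_fun n ms (\<lambda>m. 0 ^ m) = 0" .
  then show ?thesis
    unfolding rhs_def by (simp add: Li_0)
qed

section \<open>The iterated integral\<close>

lemma contour_integral_linepath_0_primitive:
  fixes \<Phi> h :: "complex \<Rightarrow> complex"
  assumes "c \<noteq> 0" "continuous_on {0..1} (\<lambda>u. \<Phi> (linepath 0 t u))"
    and "\<And>u. u \<in> {0<..<1} \<Longrightarrow>
      (\<Phi> has_field_derivative c * h (linepath 0 t u)) (at (linepath 0 t u))"
  shows "c * contour_integral (linepath 0 t) h = \<Phi> t - \<Phi> 0"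
proof -
  have "((\<lambda>u. t * (c * h (linepath 0 t u))) has_integral \<Phi> (linepath 0 t 1) - \<Phi> (linepath 0 t 0)) {0..1}"
  proof (rule fundamental_theorem_of_calculus_interior)
    fix u :: real
    assume "u \<in> {0<..<1}"
    from field_vector_diff_chain_at[OF has_vector_derivative_linepath_within assms(3)[OF this]]
    show "((\<lambda>u. \<Phi> (linepath 0 t u)) has_vector_derivative t * (c * h (linepath 0 t u))) (at u)"
      by (simp add: o_def)
  qed (use assms(2) in auto)
  then have "((\<lambda>u. h (linepath 0 t u) * (t - 0)) has_integral (\<Phi> t - \<Phi> 0) / c) {0..1}"
    using has_integral_mult_right[of _ _ "{0..1}" "1 / c"] assms(1)
    by (fastforce simp: field_simps)
  then have "(h has_contour_integral (\<Phi> t - \<Phi> 0) / c) (linepath 0 t)"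
    by (simp only: has_contour_integral_linepath)
  then show ?thesis
    using assms(1) contour_integral_unique by fastforce
qed

lemma norm_linepath_0_less_1:
  "u \<in> {0<..<1} \<Longrightarrow> norm t \<le> 1 \<Longrightarrow> norm (linepath 0 t u) < 1"
  by (auto simp: linepath_def mult_le_one intro: le_less_trans[of _ u])

lemma closed_segment_0_subset_cball: "norm t \<le> 1 \<Longrightarrow> closed_segment 0 t \<subseteq> cball 0 1"
  by (simp add: closed_segment_subset)

lemma one_notin_closed_segment_0:
  fixes t :: complex
  assumes "norm t \<le> 1" "t \<noteq> 1"
  shows "1 \<notin> closed_segment 0 t"
proof
  assume "1 \<in> closed_segment 0 t"
  then obtain u :: real where u: "0 \<le> u" "u \<le> 1" "1 = u *\<^sub>R t"
    by (auto simp: in_segment)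
  then have "norm (u *\<^sub>R t) = 1"
    by simp
  then have "u * norm t = 1"
    using u(1) by simp
  then have "u = 1"
    using mult_left_le[OF assms(1) u(1)] u(2) by linarith
  then show False
    using u(3) assms(2) by simp
qed

lemma forms_snoc_1: "forms n (ms @ [1]) = forms n ms @ [\<lambda>t. 1 / (1 - t)]"
  unfolding forms_def by simp

lemma forms_snoc_Suc: "r \<ge> 1 \<Longrightarrow> forms n (ms @ [Suc r]) = forms n (ms @ [r]) @ [\<lambda>t. 1 / t]"
  unfolding forms_def by (cases r) (simp_all add: replicate_append_same)

lemma integral_forms_Nil: "n \<ge> 1 \<Longrightarrow> of_nat n * itint (rev (forms n [])) t = rhs n [] t"
proof -
  assume "n \<ge> 1"
  have "of_nat n * contour_integral (linepath 0 t) (\<lambda>s. s ^ (n - 1) * 1) = t ^ n - 0 ^ n"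
    by (rule contour_integral_linepath_0_primitive[where \<Phi>="\<lambda>s. s ^ n"])
       (use \<open>n \<ge> 1\<close> in \<open>auto intro!: continuous_intros derivative_eq_intros\<close>)
  then show ?thesis
    using \<open>n \<ge> 1\<close> by (simp add: forms_def rhs_def)
qed

lemma integral_forms_snoc:
  assumes "n \<ge> 1"
    and "forms n ms' = forms n ms @ [f]"
    and "continuous_on S (rhs n ms')" "closed_segment 0 t \<subseteq> S" "norm t \<le> 1"
    and "\<And>s. norm s < 1 \<Longrightarrow> s \<noteq> 0 \<Longrightarrow> (rhs n ms' has_field_derivative f s * rhs n ms s) (at s)"
    and "\<And>s. norm s < 1 \<Longrightarrow> of_nat n * itint (rev (forms n ms)) s = rhs n ms s"
  shows "of_nat n * itint (rev (forms n ms')) t = rhs n ms' t"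
proof (cases "t = 0")
  case True
  then show ?thesis
    using assms(1,2) by (simp add: rhs_at_0)
next
  case False
  have "of_nat n * contour_integral (linepath 0 t) (\<lambda>s. f s * itint (rev (forms n ms)) s)
      = rhs n ms' t - rhs n ms' 0"
  proof (rule contour_integral_linepath_0_primitive)
    show "continuous_on {0..1} (\<lambda>u. rhs n ms' (linepath 0 t u))"
      using assms(4) path_image_linepath[of 0 t] unfolding path_image_def
      by (intro continuous_on_compose2[OF assms(3) continuous_on_linepath]) auto
  next
    fix u :: real
    assume u: "u \<in> {0<..<1}"
    define s where "s = linepath 0 t u"
    have "norm s < 1" "s \<noteq> 0"
      unfolding s_def using norm_linepath_0_less_1[OF u assms(5)] u False by (auto simp: linepath_def)
    then have "(rhs n ms' has_field_derivative f s * rhs n ms s) (at s)"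
      by (rule assms(6))
    moreover have "f s * rhs n ms s = of_nat n * (f s * itint (rev (forms n ms)) s)"
      using assms(7)[OF \<open>norm s < 1\<close>] by (simp add: mult.left_commute)
    ultimately show "(rhs n ms' has_field_derivative
        of_nat n * (f (linepath 0 t u) * itint (rev (forms n ms)) (linepath 0 t u))) (at (linepath 0 t u))"
      unfolding s_def[symmetric] by simp
  qed (use assms(1) in simp)
  then show ?thesis
    using assms(1,2) by (simp add: rhs_at_0)
qed

lemma integral_forms_eq_rhs:
  assumes "n \<ge> 1" "\<forall>k\<in>set ms. k \<ge> 1" "norm t \<le> 1" "ms = [] \<or> last ms \<noteq> 1 \<or> t \<noteq> 1"
  shows "of_nat n * itint (rev (forms n ms)) t = rhs n ms t"
  using assms(2-)
proof (induction ms arbitrary: t rule: rev_induct)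
  case Nil
  then show ?case using integral_forms_Nil[OF assms(1)] by simp
next
  case (snoc k ms)
  have ms: "\<forall>k\<in>set ms. k \<ge> 1" and "k \<ge> 1"
    using snoc.prems(1) by auto
  have IH: "of_nat n * itint (rev (forms n ms)) s = rhs n ms s" if "norm s < 1" for s
  proof -
    have "s \<noteq> 1" using that by auto
    then show ?thesis using snoc.IH[of s] ms that by auto
  qed
  from \<open>k \<ge> 1\<close> snoc.prems(2,3) show ?case
  proof (induction k arbitrary: t rule: nat_induct_at_least)
    case base
    have "continuous_on (cball 0 1 - {1}) (rhs n (ms @ [1]))"
      using ms by (intro continuous_on_rhs_snoc Li_continuous_on_cball_minus_1) auto
    moreover have "closed_segment 0 t \<subseteq> cball 0 1 - {1}"
      using base closed_segment_0_subset_cball one_notin_closed_segment_0 by auto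
    ultimately show ?case
      using base(1) rhs_has_field_derivative_1[OF ms] IH
      by (intro integral_forms_snoc[OF assms(1) forms_snoc_1]) auto
  next
    case (Suc r)
    have cont: "continuous_on (cball 0 1) (rhs n (ms @ [Suc r]))"
      using ms Suc.hyps by (intro continuous_on_rhs_snoc Li_continuous_on_cball) auto
    have IH_r: "of_nat n * itint (rev (forms n (ms @ [r]))) s = rhs n (ms @ [r]) s"
      if "norm s < 1" for s
      using Suc.IH[of s] that by fastforce
    show ?case
      using rhs_has_field_derivative_Suc[OF Suc.hyps ms] IH_r
      by (intro integral_forms_snoc[OF assms(1) forms_snoc_Suc[OF Suc.hyps] cont
          closed_segment_0_subset_cball[OF Suc.prems(1)] Suc.prems(1)]) auto
  qed
qed

theorem mainTheorem1:
  fixes ms :: "nat list" and n :: nat and x :: complex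
  assumes "length ms \<ge> 1"
    and "\<forall>mi\<in>set ms. mi \<ge> 1"
    and "n \<ge> 1"
    and "norm x \<le> 1"
    and "(last ms, x) \<noteq> (1, 1)"
  shows "of_nat n * iterated_integral_0 x (forms n ms)
    = (-1) ^ length ms * zeta_star_x n ms (replicate (length ms - 1) 1 @ [x])
      - (\<Sum>j=1..length ms. (-1) ^ j * zeta_star n (take (j - 1) ms)
                              * Li (rev (drop (j - 1) ms)) x)"
proof -
  have "ms \<noteq> []"
    using assms(1) by auto
  have "of_nat n * iterated_integral_0 x (forms n ms) = rhs n ms x"
    unfolding iterated_integral_0_def using assms(2-5) by (intro integral_forms_eq_rhs) auto
  also have "\<dots> = (-1) ^ length ms * zeta_star_x n ms (replicate (length ms - 1) 1 @ [x])
      - (\<Sum>j=1..length ms. (-1) ^ j * zeta_star n (take (j - 1) ms)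
                              * Li (rev (drop (j - 1) ms)) x)"
    unfolding rhs_def zeta_star_x_eq_zeta_star_fun[OF \<open>ms \<noteq> []\<close>]
    by (simp add: sum.atLeast1_atMost_eq)
  finally show ?thesis .
qed

end
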